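(* Under the standing setup, suppose Assumptions 1 and 2 hold. Then (1) for every $c\in\mathcal C$ and $(w,z)\in S_0$ there is a unique $\xi\in(0,w]$ solving $$u'(\xi,z)=\max\Big\{\mathbb E_z\hat\beta\hat R\,u'\big(c(\hat R(w-\xi)+\hat Y,\hat Z),\hat Z\big),\ u'(w,z)\Big\},$$ so the operator $T$ (with $Tc(w,z):=\xi$) is well defined; $T$ maps $\mathcal C$ into $\mathcal C$ and has a unique fixed point $c^*\in\mathcal C$; and (2) for every $c\in\mathcal C$, $\rho(T^kc,c^* )\to0$ as $k\to\infty$.
   Context: Standing setup. Let $\mathsf Z$ be a finite set and $\{Z_t\}_{t\ge 0}$ a time-homogeneous Markov chain on $\mathsf Z$ with transition probabilities $P(z,\hat z)$. Let $\{\epsilon_t\}_{t\ge1}$ be i.i.d. random elements with common distribution $\pi$, independent of $\{Z_t\}$. Given nonnegative measurable functions $\beta,R,Y$, set $\beta_0=1$ and, for $t\ge1$, $\beta_t=\beta(Z_{t-1},Z_t,\epsilon_t)$, $R_t=R(Z_{t-1},Z_t,\epsilon_t)$, $Y_t=Y(Z_{t-1},Z_t,\epsilon_t)$. Let $u:(0,\infty)\times\mathsf Z\to\mathbb R$ with $u'(c,z)$ its derivative in $c$. $\mathbb E_z$ denotes expectation conditional on $Z_0=z$; under $\mathbb E_z$, $\hat Z=Z_1$, $\hat\beta=\beta(z,\hat Z,\hat\epsilon)$, $\hat R=R(z,\hat Z,\hat\epsilon)$, $\hat Y=Y(z,\hat Z,\hat\epsilon)$, $\hat\epsilon=\epsilon_1$.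 $S_0=(0,\infty)\times\mathsf Z$. Assumption 1: for every $z$, $u(\cdot,z)$ is twice differentiable on $(0,\infty)$, $u'(\cdot,z)>0$, $u''(\cdot,z)<0$, $u'(c,z)\to\infty$ as $c\to0$, and $\lim_{c\to\infty}u'(c,z)<1$. Assumption 2: (a) for all $z$, $\mathbb E_zu'(\hat Y,\hat Z)<\infty$ and $\mathbb E_z\hat\beta\hat R\,u'(\hat Y,\hat Z)<\infty$; (b) $r(K(1))<1$, where $r$ denotes spectral radius and $K(\theta)$ is the $\mathsf Z\times\mathsf Z$ matrix $K_{z\hat z}(\theta)=P(z,\hat z)\int\beta(z,\hat z,\epsilon)R(z,\hat z,\epsilon)^\theta\,\pi(d\epsilon)$. $\mathcal C$ is the set of continuous $c:S_0\to\mathbb R_+$ such that $w\mapsto c(w,z)$ is increasing for each $z$, $0<c(w,z)\le w$, and $\sup_{(w,z)\in S_0}|u'(c(w,z),z)-u'(w,z)|<\infty$. On $\mathcal C$, $\rho(c_1,c_2)=\sup_{(w,z)\in S_0}|u'(c_1(w,z),z)-u'(c_2(w,z),z)|$. *)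

theory Defs
  imports "HOL-Probability.Probability"
begin

definition spectral_radius :: "complex^'n^'n \<Rightarrow> real" where
  "spectral_radius A = Sup {cmod l | l. \<exists>v. v \<noteq> 0 \<and> A *v v = l *s v}"

text \<open>Extended marginal utility u'(x,z) in [0,\<infinity>]; u'(x,z) = \<infinity> for x \<le> 0
  (consistent with u'(c,z) \<rightarrow> \<infinity> as c \<rightarrow> 0).\<close>
definition ext_mu :: "(real \<Rightarrow> 'z \<Rightarrow> real) \<Rightarrow> real \<Rightarrow> 'z \<Rightarrow> ennreal" where
  "ext_mu du x z = (if x > 0 then ennreal (du x z) else \<infinity>)"

text \<open>One-step conditional expectation E_z f(Zhat, epsilonhat) for the Markov kernel P and
  the shock distribution pi (nonnegative integrands, value in [0,\<infinity>]).\<close>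
definition cexp :: "('z::finite \<Rightarrow> 'z \<Rightarrow> real) \<Rightarrow> 'e measure \<Rightarrow> 'z \<Rightarrow> ('z \<Rightarrow> 'e \<Rightarrow> ennreal) \<Rightarrow> ennreal" where
  "cexp P pim z f = (\<Sum>zh\<in>UNIV. ennreal (P z zh) * (\<integral>\<^sup>+ e. f zh e \<partial>pim))"

definition Kmat :: "('z::finite \<Rightarrow> 'z \<Rightarrow> real) \<Rightarrow> 'e measure \<Rightarrow> ('z \<Rightarrow> 'z \<Rightarrow> 'e \<Rightarrow> real)
    \<Rightarrow> ('z \<Rightarrow> 'z \<Rightarrow> 'e \<Rightarrow> real) \<Rightarrow> real \<Rightarrow> complex^'z^'z" where
  "Kmat P pim beta R theta = (\<chi> z zh. complex_of_real
      (P z zh * enn2real (\<integral>\<^sup>+ e. ennreal (beta z zh e * R z zh e powr theta) \<partial>pim)))"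

text \<open>The candidate class \<C> (functions are only relevant on S_0 = (0,\<infinity>) \<times> Z).\<close>
definition candC :: "(real \<Rightarrow> 'z \<Rightarrow> real) \<Rightarrow> (real \<Rightarrow> 'z \<Rightarrow> real) set" where
  "candC du = {c. (\<forall>z. continuous_on {0<..} (\<lambda>w. c w z))
      \<and> (\<forall>z. mono_on {0<..} (\<lambda>w. c w z))
      \<and> (\<forall>w z. w > 0 \<longrightarrow> 0 < c w z \<and> c w z \<le> w)
      \<and> (\<exists>M. \<forall>w z. w > 0 \<longrightarrow> \<bar>du (c w z) z - du w z\<bar> \<le> M)}"

definition rho :: "(real \<Rightarrow> 'z \<Rightarrow> real) \<Rightarrow> (real \<Rightarrow> 'z \<Rightarrow> real) \<Rightarrow> (real \<Rightarrow> 'z \<Rightarrow> real) \<Rightarrow> real" where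
  "rho du c1 c2 = (SUP wz \<in> {0<..} \<times> UNIV. \<bar>du (c1 (fst wz) (snd wz)) (snd wz) - du (c2 (fst wz) (snd wz)) (snd wz)\<bar>)"

definition euler_eq :: "('z::finite \<Rightarrow> 'z \<Rightarrow> real) \<Rightarrow> 'e measure
    \<Rightarrow> ('z \<Rightarrow> 'z \<Rightarrow> 'e \<Rightarrow> real) \<Rightarrow> ('z \<Rightarrow> 'z \<Rightarrow> 'e \<Rightarrow> real) \<Rightarrow> ('z \<Rightarrow> 'z \<Rightarrow> 'e \<Rightarrow> real)
    \<Rightarrow> (real \<Rightarrow> 'z \<Rightarrow> real) \<Rightarrow> (real \<Rightarrow> 'z \<Rightarrow> real) \<Rightarrow> real \<Rightarrow> 'z \<Rightarrow> real \<Rightarrow> bool" where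
  "euler_eq P pim beta R Y du c w z xi \<longleftrightarrow>
     ennreal (du xi z) =
       max (cexp P pim z (\<lambda>zh e. ennreal (beta z zh e * R z zh e)
                 * (let x = R z zh e * (w - xi) + Y z zh e
                    in if x > 0 then ennreal (du (c x zh) zh) else \<infinity>)))
           (ennreal (du w z))"

definition Top :: "('z::finite \<Rightarrow> 'z \<Rightarrow> real) \<Rightarrow> 'e measure
    \<Rightarrow> ('z \<Rightarrow> 'z \<Rightarrow> 'e \<Rightarrow> real) \<Rightarrow> ('z \<Rightarrow> 'z \<Rightarrow> 'e \<Rightarrow> real) \<Rightarrow> ('z \<Rightarrow> 'z \<Rightarrow> 'e \<Rightarrow> real)
    \<Rightarrow> (real \<Rightarrow> 'z \<Rightarrow> real) \<Rightarrow> (real \<Rightarrow> 'z \<Rightarrow> real) \<Rightarrow> real \<Rightarrow> 'z \<Rightarrow> real" where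
  "Top P pim beta R Y du c w z = (THE xi. 0 < xi \<and> xi \<le> w \<and> euler_eq P pim beta R Y du c w z xi)"

end

theory Submission
  imports Defs
begin

text \<open>The left side \<open>u'(\<xi>, z)\<close> of the Euler equation decreases strictly from \<open>\<infinity>\<close> as \<open>\<xi>\<close> grows,
  while the right side is continuous and nondecreasing in \<open>\<xi>\<close> (savings \<open>w - \<xi>\<close> fall and \<open>c\<close> is
  increasing), so the equation has exactly one root in \<open>(0, w]\<close>; comparing the equation at two
  wealth levels shows that \<open>Tc\<close> and savings \<open>w - Tc\<close> are both increasing, so \<open>Tc\<close> is
  1-Lipschitz.

  Comparing the equations for two policies gives \<open>|u'(Tc) - u'(Td)| \<le> K(1) |u'(c) - u'(d)|\<close>
  statewise. As \<open>r(K(1)) < 1\<close>, a Brouwer fixed point argument yields \<open>v > 0\<close> and \<open>\<theta> < 1\<close> with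
  \<open>K(1) v \<le> \<theta> v\<close>, so \<open>T\<close> contracts the \<open>v\<close>-weighted sup distance of marginal utilities. The
  marginal utilities of the iterates of \<open>T\<close> from the identity policy then converge uniformly;
  inverting \<open>u'\<close> on the limit gives \<open>c*\<close>, and uniqueness and global convergence follow from the
  contraction estimate.\<close>

lemma geometric_increments_limit:
  fixes a :: "nat \<Rightarrow> real"
  assumes th: "0 \<le> \<theta>" "\<theta> < 1" and incr: "\<And>n. \<bar>a (Suc n) - a n\<bar> \<le> B * \<theta>^n"
  shows "a \<longlonglongrightarrow> lim a" and "\<bar>a n - lim a\<bar> \<le> B * \<theta>^n / (1 - \<theta>)"
proof -
  define d where "d k = a (Suc k) - a k" for k
  have summable_d: "summable d"
    by (rule summable_comparison_test'[of "\<lambda>k. B * \<theta>^k"])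
      (use th incr in \<open>auto simp: d_def intro!: summable_mult summable_geometric\<close>)
  have a_eq: "a 0 + (\<Sum>k<n. d k) = a n" for n
    unfolding d_def by (simp add: sum_lessThan_telescope)
  have "(\<lambda>n. a 0 + (\<Sum>k<n. d k)) \<longlonglongrightarrow> a 0 + suminf d"
    by (intro tendsto_add tendsto_const summable_LIMSEQ summable_d)
  then have lim: "a \<longlonglongrightarrow> a 0 + suminf d"
    by (simp only: a_eq)
  then show "a \<longlonglongrightarrow> lim a"
    by (simp add: limI)
  have "\<bar>a n - lim a\<bar> = norm (\<Sum>k. d (k + n))"
    using suminf_split_initial_segment[OF summable_d, of n] limI[OF lim] a_eq[of n] by simp
  also have "\<dots> \<le> (\<Sum>k. (B * \<theta>^n) * \<theta>^k)"
  proof (rule norm_suminf_le)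
    show "norm (d (k + n)) \<le> B * \<theta>^n * \<theta>^k" for k
      using incr[of "k + n"] by (simp add: d_def power_add mult_ac)
    show "summable (\<lambda>k. B * \<theta>^n * \<theta>^k)"
      using th by (intro summable_mult summable_geometric) auto
  qed
  also have "\<dots> = B * \<theta>^n / (1 - \<theta>)"
    using th by (subst suminf_mult[OF summable_geometric]) (auto simp: suminf_geometric)
  finally show "\<bar>a n - lim a\<bar> \<le> B * \<theta>^n / (1 - \<theta>)" .
qed

lemma abs_le_geometric_imp_zero:
  fixes y :: real
  assumes "0 \<le> \<theta>" "\<theta> < 1" "\<And>n. \<bar>y\<bar> \<le> B * \<theta>^n"
  shows "y = 0"
proof -
  have "(\<lambda>n. B * \<theta>^n) \<longlonglongrightarrow> 0"
    using assms by (intro tendsto_mult_right_zero LIMSEQ_power_zero) auto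
  then have "\<bar>y\<bar> \<le> 0"
    using LIMSEQ_le_const[of "\<lambda>n. B * \<theta>^n" 0 "\<bar>y\<bar>"] assms(3) by auto
  then show ?thesis by simp
qed

lemma cexp_mono:
  "(\<And>zh e. f zh e \<le> g zh e) \<Longrightarrow> cexp P pim z f \<le> cexp P pim z g"
  unfolding cexp_def by (intro sum_mono mult_left_mono nn_integral_mono) auto

lemma cexp_add:
  assumes "\<And>zh. f zh \<in> borel_measurable pim" "\<And>zh. g zh \<in> borel_measurable pim"
  shows "cexp P pim z (\<lambda>zh e. f zh e + g zh e) = cexp P pim z f + cexp P pim z g"
  unfolding cexp_def using assms by (simp add: nn_integral_add distrib_left sum.distrib)

section \<open>Subinvariant vectors of nonnegative matrices\<close>

definition prob_simplex :: "(real^'n) set" where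
  "prob_simplex = {x. (\<forall>i. 0 \<le> x$i) \<and> (\<Sum>i\<in>UNIV. x$i) = 1}"

lemma compact_prob_simplex: "compact (prob_simplex :: (real^'n::finite) set)"
proof -
  have "closed (prob_simplex :: (real^'n) set)"
    unfolding prob_simplex_def Collect_conj_eq Collect_all_eq
    by (intro closed_Int closed_INT ballI closed_Collect_le closed_Collect_eq
        continuous_intros continuous_on_component)
  moreover have "norm x \<le> 1" if "x \<in> prob_simplex" for x :: "real^'n"
    using norm_le_l1_cart[of x] that by (simp add: prob_simplex_def)
  then have "bounded (prob_simplex :: (real^'n) set)"
    unfolding bounded_iff by blast
  ultimately show ?thesis by (simp add: compact_eq_bounded_closed)
qed

lemma convex_prob_simplex: "convex prob_simplex"
  unfolding convex_def prob_simplex_def by (auto simp: sum.distrib sum_distrib_left[symmetric])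

lemma prob_simplex_nonempty: "(prob_simplex :: (real^'n::finite) set) \<noteq> {}"
proof -
  have "(\<chi> i. 1 / real CARD('n)) \<in> (prob_simplex :: (real^'n) set)"
    unfolding prob_simplex_def by simp
  then show ?thesis by blast
qed

lemma perturbed_eigenvector:
  fixes K :: "'n::finite \<Rightarrow> 'n \<Rightarrow> real"
  assumes K: "\<And>i j. K i j \<ge> 0" and \<epsilon>: "\<epsilon> > 0"
  obtains x where "x \<in> prob_simplex" "\<And>i. x$i > 0"
    "\<And>i. (\<Sum>j\<in>UNIV. K i j * x$j) + \<epsilon> = (\<Sum>k\<in>UNIV. (\<Sum>j\<in>UNIV. K k j * x$j) + \<epsilon>) * x$i"
proof -
  define N where "N x = (\<Sum>k\<in>UNIV. (\<Sum>j\<in>UNIV. K k j * x$j) + \<epsilon>)" for x :: "real^'n"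
  have row_pos: "(\<Sum>j\<in>UNIV. K i j * x$j) + \<epsilon> > 0" if "x \<in> prob_simplex" for x i
    using that K \<epsilon> unfolding prob_simplex_def
    by (intro add_nonneg_pos sum_nonneg mult_nonneg_nonneg) auto
  have N_pos: "N x > 0" if "x \<in> prob_simplex" for x
    unfolding N_def using row_pos[OF that] by (intro sum_pos) auto
  define f where "f x = (\<chi> i. ((\<Sum>j\<in>UNIV. K i j * x$j) + \<epsilon>) / N x)" for x :: "real^'n"
  have "continuous_on prob_simplex f"
    unfolding f_def
  proof (intro continuous_on_vec_lambda continuous_on_divide)
    show "continuous_on prob_simplex N"
      unfolding N_def by (intro continuous_intros)
    show "\<forall>x\<in>prob_simplex. N x \<noteq> 0"
      using N_pos by force
  qed (intro continuous_intros)
  moreover have "f \<in> prob_simplex \<rightarrow> prob_simplex"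
  proof
    fix x :: "real^'n"
    assume x: "x \<in> prob_simplex"
    have "(\<Sum>i\<in>UNIV. f x $ i) = N x / N x"
      unfolding f_def N_def by (simp add: sum_divide_distrib[symmetric])
    with N_pos[OF x] row_pos[OF x] show "f x \<in> prob_simplex"
      unfolding prob_simplex_def f_def by (auto intro: less_imp_le)
  qed
  ultimately obtain x where x: "x \<in> prob_simplex" "f x = x"
    using brouwer[OF compact_prob_simplex convex_prob_simplex prob_simplex_nonempty] by blast
  have x_eq: "x$i = ((\<Sum>j\<in>UNIV. K i j * x$j) + \<epsilon>) / N x" for i
    using arg_cong[OF x(2), of "\<lambda>y. y $ i"] by (simp add: f_def)
  show ?thesis
  proof (rule that[OF x(1)])
    show "x$i > 0" for i
      using x_eq[of i] row_pos[OF x(1)] N_pos[OF x(1)] by simp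
    show "(\<Sum>j\<in>UNIV. K i j * x$j) + \<epsilon> = (\<Sum>k\<in>UNIV. (\<Sum>j\<in>UNIV. K k j * x$j) + \<epsilon>) * x$i" for i
      using x_eq[of i] N_pos[OF x(1)] unfolding N_def by (simp add: field_simps)
  qed
qed

text \<open>The perturbation by \<open>\<epsilon>\<close> makes the Brouwer fixed point strictly positive; if the
  perturbed eigenvalues stay \<open>\<ge> 1\<close>, a limit point is a nonnegative eigenvector.\<close>
lemma subinvariant_vector_exists:
  fixes K :: "'n::finite \<Rightarrow> 'n \<Rightarrow> real"
  assumes K: "\<And>i j. K i j \<ge> 0"
    and no_eigenvector: "\<And>x l. x \<in> prob_simplex \<Longrightarrow> l \<ge> 1
        \<Longrightarrow> (\<And>i. (\<Sum>j\<in>UNIV. K i j * x$j) = l * x$i) \<Longrightarrow> False"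
  shows "\<exists>v \<theta>. (\<forall>i. v i > 0) \<and> \<theta> < 1 \<and> (\<forall>i. (\<Sum>j\<in>UNIV. K i j * v j) \<le> \<theta> * v i)"
proof (rule ccontr)
  assume no_subinvariant: "\<not> ?thesis"
  define N where "N \<epsilon> x = (\<Sum>k\<in>UNIV. (\<Sum>j\<in>UNIV. K k j * x$j) + \<epsilon>)" for \<epsilon> and x :: "real^'n"
  define \<epsilon> where "\<epsilon> n = inverse (real (Suc n))" for n
  have "\<exists>x. x \<in> prob_simplex \<and> (\<forall>i. (\<Sum>j\<in>UNIV. K i j * x$j) + \<epsilon> n = N (\<epsilon> n) x * x$i)
      \<and> N (\<epsilon> n) x \<ge> 1" for n
  proof -
    have "\<epsilon> n > 0"
      by (simp add: \<epsilon>_def)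
    obtain x where x: "x \<in> prob_simplex" "\<And>i. x$i > 0"
      "\<And>i. (\<Sum>j\<in>UNIV. K i j * x$j) + \<epsilon> n = N (\<epsilon> n) x * x$i"
      unfolding N_def by (rule perturbed_eigenvector[of K "\<epsilon> n", OF K \<open>\<epsilon> n > 0\<close>]) blast
    \<comment> \<open>otherwise \<open>x\<close> itself would be subinvariant with factor \<open>N (\<epsilon> n) x\<close>\<close>
    have "(\<Sum>j\<in>UNIV. K i j * x$j) \<le> N (\<epsilon> n) x * x$i" for i
      using x(3)[of i] \<open>\<epsilon> n > 0\<close> by linarith
    then have "N (\<epsilon> n) x \<ge> 1"
      using no_subinvariant x(2) by (metis not_le)
    with x show ?thesis by blast
  qed
  then obtain X where X: "\<And>n. X n \<in> prob_simplex"
    "\<And>n i. (\<Sum>j\<in>UNIV. K i j * X n $ j) + \<epsilon> n = N (\<epsilon> n) (X n) * X n $ i"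
    "\<And>n. N (\<epsilon> n) (X n) \<ge> 1"
    by metis
  obtain l r where lr: "l \<in> prob_simplex" "strict_mono r" "(X \<circ> r) \<longlonglongrightarrow> l"
    using compact_imp_seq_compact[OF compact_prob_simplex] X(1) unfolding seq_compact_def by metis
  have \<epsilon>_lim: "(\<lambda>n. \<epsilon> (r n)) \<longlonglongrightarrow> 0"
    using LIMSEQ_subseq_LIMSEQ[OF LIMSEQ_inverse_real_of_nat lr(2)] by (simp add: \<epsilon>_def o_def)
  have X_lim: "(\<lambda>n. X (r n) $ j) \<longlonglongrightarrow> l $ j" for j
    using tendsto_vec_nth[OF lr(3), of j] by (simp add: o_def)
  have row_lim: "(\<lambda>n. (\<Sum>j\<in>UNIV. K i j * X (r n) $ j) + \<epsilon> (r n)) \<longlonglongrightarrow> (\<Sum>j\<in>UNIV. K i j * l $ j)" for i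
    using tendsto_add[OF tendsto_sum[OF tendsto_mult[OF tendsto_const X_lim]] \<epsilon>_lim] by simp
  define \<Lambda> where "\<Lambda> = (\<Sum>i\<in>UNIV. \<Sum>j\<in>UNIV. K i j * l $ j)"
  have N_lim: "(\<lambda>n. N (\<epsilon> (r n)) (X (r n))) \<longlonglongrightarrow> \<Lambda>"
    unfolding N_def \<Lambda>_def by (intro tendsto_sum row_lim)
  have "\<Lambda> \<ge> 1"
    using LIMSEQ_le_const[OF N_lim, of 1] X(3) by blast
  moreover have "(\<Sum>j\<in>UNIV. K i j * l $ j) = \<Lambda> * l $ i" for i
  proof (rule LIMSEQ_unique[OF row_lim])
    show "(\<lambda>n. (\<Sum>j\<in>UNIV. K i j * X (r n) $ j) + \<epsilon> (r n)) \<longlonglongrightarrow> \<Lambda> * l $ i"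
      unfolding X(2) by (intro tendsto_mult N_lim X_lim)
  qed
  ultimately show False
    using no_eigenvector[OF lr(1)] by blast
qed

lemma eigenvalue_le_row_sums:
  fixes A :: "complex^'n^'n"
  assumes eigen: "A *v v = l *s v" and v: "v \<noteq> 0"
  shows "cmod l \<le> (\<Sum>i\<in>UNIV. \<Sum>j\<in>UNIV. cmod (A$i$j))"
proof -
  define m where "m = Max (range (\<lambda>j. cmod (v$j)))"
  have le_m: "cmod (v$j) \<le> m" for j
    unfolding m_def by (rule Max_ge) auto
  have "m \<in> range (\<lambda>j. cmod (v$j))"
    unfolding m_def by (rule Max_in) auto
  then obtain i where i: "cmod (v$i) = m"
    by auto
  obtain k where "v$k \<noteq> 0"
    using v by (auto simp: vec_eq_iff)
  then have m_pos: "m > 0"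
    using le_m[of k] by (meson norm_ge_zero norm_le_zero_iff order.strict_iff_not order_trans)
  have "cmod l * m = cmod (\<Sum>j\<in>UNIV. A$i$j * v$j)"
    using arg_cong[OF eigen, of "\<lambda>x. x $ i"] i
    by (simp add: matrix_vector_mult_def vector_scalar_mult_def norm_mult)
  also have "\<dots> \<le> (\<Sum>j\<in>UNIV. cmod (A$i$j) * m)"
    by (rule order_trans[OF norm_sum]) (auto simp: norm_mult intro!: sum_mono mult_left_mono le_m)
  also have "\<dots> = (\<Sum>j\<in>UNIV. cmod (A$i$j)) * m"
    by (simp add: sum_distrib_right)
  finally have "cmod l \<le> (\<Sum>j\<in>UNIV. cmod (A$i$j))"
    using m_pos by simp
  also have "\<dots> \<le> (\<Sum>i\<in>UNIV. \<Sum>j\<in>UNIV. cmod (A$i$j))"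
    by (rule member_le_sum) (auto intro: sum_nonneg)
  finally show ?thesis .
qed

lemma eigenvalue_le_spectral_radius:
  fixes A :: "complex^'n^'n"
  assumes "A *v v = l *s v" "v \<noteq> 0"
  shows "cmod l \<le> spectral_radius A"
  unfolding spectral_radius_def
proof (rule cSup_upper)
  show "cmod l \<in> {cmod l | l. \<exists>v. v \<noteq> 0 \<and> A *v v = l *s v}"
    using assms by blast
  show "bdd_above {cmod l | l. \<exists>v. v \<noteq> 0 \<and> A *v v = l *s v}"
    unfolding bdd_above_def using eigenvalue_le_row_sums[of A] by blast
qed

lemma subinvariant_vector_of_spectral_radius_lt_1:
  fixes K :: "'n::finite \<Rightarrow> 'n \<Rightarrow> real"
  assumes K: "\<And>i j. K i j \<ge> 0"
    and radius: "spectral_radius (\<chi> i j. complex_of_real (K i j)) < 1"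
  shows "\<exists>v \<theta>. (\<forall>i. v i > 0) \<and> \<theta> < 1 \<and> (\<forall>i. (\<Sum>j\<in>UNIV. K i j * v j) \<le> \<theta> * v i)"
proof (rule subinvariant_vector_exists[OF K])
  fix x :: "real^'n" and l :: real
  assume x: "x \<in> prob_simplex" and l: "l \<ge> 1" and eigen: "\<And>i. (\<Sum>j\<in>UNIV. K i j * x$j) = l * x$i"
  define u where "u = (\<chi> i. complex_of_real (x$i))"
  have "u \<noteq> 0"
  proof
    assume "u = 0"
    then have "x$i = 0" for i
      unfolding u_def by (metis (mono_tags) of_real_eq_0_iff vec_lambda_beta zero_index)
    then show False
      using x by (simp add: prob_simplex_def)
  qed
  moreover have "(\<chi> i j. complex_of_real (K i j)) *v u = complex_of_real l *s u"
    using eigen by (simp add: vec_eq_iff matrix_vector_mult_def vector_scalar_mult_def u_def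
        flip: of_real_mult of_real_sum)
  ultimately have "cmod (complex_of_real l) \<le> spectral_radius (\<chi> i j. complex_of_real (K i j))"
    by (rule eigenvalue_le_spectral_radius[rotated])
  with radius l show False by simp
qed

section \<open>The Euler operator\<close>

locale income_fluctuation =
  fixes P :: "'z::finite \<Rightarrow> 'z \<Rightarrow> real" and pim :: "'e measure"
    and beta R Y :: "'z \<Rightarrow> 'z \<Rightarrow> 'e \<Rightarrow> real"
    and du :: "real \<Rightarrow> 'z \<Rightarrow> real"
  assumes P_nonneg: "\<And>z zh. P z zh \<ge> 0"
    and beta_meas: "\<And>z zh. beta z zh \<in> borel_measurable pim"
    and R_meas: "\<And>z zh. R z zh \<in> borel_measurable pim"
    and Y_meas: "\<And>z zh. Y z zh \<in> borel_measurable pim"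
    and beta_nonneg: "\<And>z zh e. beta z zh e \<ge> 0"
    and R_nonneg: "\<And>z zh e. R z zh e \<ge> 0"
    and Y_nonneg: "\<And>z zh e. Y z zh e \<ge> 0"
    and du_cont: "\<And>z. continuous_on {0<..} (\<lambda>c. du c z)"
    and du_less: "\<And>a b z. 0 < a \<Longrightarrow> a < b \<Longrightarrow> du b z < du a z"
    and du_pos: "\<And>c z. c > 0 \<Longrightarrow> du c z > 0"
    and du_at0: "\<And>z. filterlim (\<lambda>c. du c z) at_top (at_right 0)"
    and discounted_mu_income_finite:
      "\<And>z. cexp P pim z (\<lambda>zh e. ennreal (beta z zh e * R z zh e) * ext_mu du (Y z zh e) zh) < \<infinity>"
    and discounted_return_finite:
      "\<And>z zh. P z zh > 0 \<Longrightarrow> (\<integral>\<^sup>+ e. ennreal (beta z zh e * R z zh e) \<partial>pim) < \<infinity>"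
begin

abbreviation T where "T \<equiv> Top P pim beta R Y du"

abbreviation bR where "bR z zh e \<equiv> ennreal (beta z zh e * R z zh e)"

lemma du_le: "0 < a \<Longrightarrow> a \<le> b \<Longrightarrow> du b z \<le> du a z"
  using du_less[of a b z] by (cases "a = b") auto

lemma du_le_iff: "0 < a \<Longrightarrow> 0 < b \<Longrightarrow> du a z \<le> du b z \<longleftrightarrow> b \<le> a"
  using du_less[of a b z] du_le[of b a z] by (meson linorder_not_le)

lemma du_inject: "0 < a \<Longrightarrow> 0 < b \<Longrightarrow> du a z = du b z \<longleftrightarrow> a = b"
  by (metis du_le_iff order_antisym order_refl)

lemma du_exceeds_near_0:
  obtains b where "b > 0" "\<And>y. 0 < y \<Longrightarrow> y < b \<Longrightarrow> B < du y z"
proof -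
  have "eventually (\<lambda>y. B < du y z) (at_right 0)"
    using du_at0[of z] unfolding filterlim_at_top_dense by blast
  with that show ?thesis
    unfolding eventually_at_right_field by blast
qed

lemma du_crosses:
  assumes w: "0 < w" and h: "continuous_on {0<..w} h" and bounded: "\<And>x. 0 < x \<Longrightarrow> x \<le> w \<Longrightarrow> h x \<le> B"
    and at_w: "du w z \<le> h w"
  obtains xi where "0 < xi" "xi \<le> w" "du xi z = h xi"
proof -
  obtain b where b: "b > 0" "\<And>y. 0 < y \<Longrightarrow> y < b \<Longrightarrow> B < du y z"
    by (rule du_exceeds_near_0[of B z]) blast
  define x0 where "x0 = min (b/2) w"
  have x0: "0 < x0" "x0 \<le> w" "x0 < b"
    using b w by (auto simp: x0_def)
  have cont: "continuous_on {x0..w} (\<lambda>x. du x z - h x)"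
    using x0 by (intro continuous_on_diff continuous_on_subset[OF du_cont] continuous_on_subset[OF h]) auto
  have "du w z - h w \<le> 0" "0 \<le> du x0 z - h x0"
    using at_w b(2)[OF x0(1,3)] bounded[OF x0(1,2)] by auto
  then obtain xi where "x0 \<le> xi" "xi \<le> w" "du xi z - h xi = 0"
    using IVT2'[of "\<lambda>x. du x z - h x", OF _ _ x0(2) cont] by blast
  with x0 show ?thesis
    by (intro that[of xi]) auto
qed

definition du_inv :: "'z \<Rightarrow> real \<Rightarrow> real" where
  "du_inv z y = (THE t. 0 < t \<and> du t z = y)"

lemma du_inv_du: "0 < t \<Longrightarrow> du_inv z (du t z) = t"
  unfolding du_inv_def by (rule the_equality) (auto simp: du_inject)

lemma continuous_on_du_inv: "continuous_on ((\<lambda>t. du t z) ` {0<..}) (du_inv z)"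
  by (rule continuous_on_inverse_open) (auto intro: du_cont du_inv_du)

lemma candC_D:
  assumes "c \<in> candC du"
  shows "continuous_on {0<..} (\<lambda>w. c w z)" "mono_on {0<..} (\<lambda>w. c w z)"
    "w > 0 \<Longrightarrow> 0 < c w z" "w > 0 \<Longrightarrow> c w z \<le> w"
  using assms unfolding candC_def by auto

lemma candC_mono: "c \<in> candC du \<Longrightarrow> 0 < x \<Longrightarrow> x \<le> y \<Longrightarrow> c x z \<le> c y z"
  using candC_D(2)[of c z] by (auto simp: mono_on_def)

lemma candC_mu_bound:
  assumes "c \<in> candC du"
  obtains M where "M \<ge> 0" "\<And>w z. w > 0 \<Longrightarrow> \<bar>du (c w z) z - du w z\<bar> \<le> M"
proof -
  obtain M where M: "\<And>w z. w > 0 \<Longrightarrow> \<bar>du (c w z) z - du w z\<bar> \<le> M"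
    using assms unfolding candC_def by blast
  then have "M \<ge> 0"
    using abs_ge_zero order_trans zero_less_one by blast
  with M that show ?thesis by blast
qed

lemma id_in_candC: "(\<lambda>x z. x) \<in> candC du"
  unfolding candC_def by (auto simp: mono_on_def intro: continuous_on_id)

lemma continuous_on_du_policy: "c \<in> candC du \<Longrightarrow> continuous_on {0<..} (\<lambda>x. du (c x z) z)"
  by (rule continuous_on_compose2[OF du_cont candC_D(1)]) (auto dest: candC_D(3))

definition policy_mu :: "(real \<Rightarrow> 'z \<Rightarrow> real) \<Rightarrow> 'z \<Rightarrow> real \<Rightarrow> ennreal" where
  "policy_mu c zh x = (if x > 0 then ennreal (du (c x zh) zh) else \<infinity>)"

definition expected_mu :: "(real \<Rightarrow> 'z \<Rightarrow> real) \<Rightarrow> 'z \<Rightarrow> real \<Rightarrow> ennreal" where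
  "expected_mu c z s = cexp P pim z (\<lambda>zh e. bR z zh e * policy_mu c zh (R z zh e * s + Y z zh e))"

lemma euler_eq_iff:
  "euler_eq P pim beta R Y du c w z xi
    \<longleftrightarrow> ennreal (du xi z) = max (expected_mu c z (w - xi)) (ennreal (du w z))"
  unfolding euler_eq_def expected_mu_def policy_mu_def Let_def by simp

lemma policy_mu_measurable:
  assumes "c \<in> candC du"
  shows "policy_mu c zh \<in> borel_measurable borel"
proof -
  have "policy_mu c zh = (\<lambda>x. if x \<in> {0<..} then ennreal (du (c x zh) zh) else \<infinity>)"
    unfolding policy_mu_def by auto
  also have "\<dots> \<in> borel_measurable borel"
    by (rule borel_measurable_continuous_on_if)
      (auto intro!: continuous_on_ennreal continuous_on_du_policy assms)
  finally show ?thesis .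
qed

lemma bR_measurable: "(\<lambda>e. bR z zh e) \<in> borel_measurable pim"
  using beta_meas R_meas by measurable

lemma expected_mu_integrand_measurable:
  assumes "c \<in> candC du"
  shows "(\<lambda>e. bR z zh e * policy_mu c zh (R z zh e * s + Y z zh e)) \<in> borel_measurable pim"
proof -
  have "(\<lambda>e. R z zh e * s + Y z zh e) \<in> borel_measurable pim"
    using R_meas Y_meas by measurable
  from measurable_compose[OF this policy_mu_measurable[OF assms]]
  show ?thesis
    by (intro borel_measurable_times_ennreal bR_measurable)
qed

lemma policy_mu_antimono:
  assumes c: "c \<in> candC du" and "0 \<le> x" "x \<le> y"
  shows "policy_mu c zh y \<le> policy_mu c zh x"
proof (cases "x > 0")
  case True
  then have "du (c y zh) zh \<le> du (c x zh) zh"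
    using assms candC_D(3)[OF c] candC_mono[OF c] by (intro du_le) auto
  with True assms show ?thesis
    unfolding policy_mu_def by (auto intro: ennreal_leI)
qed (simp add: policy_mu_def)

lemma policy_mu_le_plus:
  assumes d: "d \<in> candC du" and D: "D \<ge> 0"
    and cd: "\<And>x. x > 0 \<Longrightarrow> du (c x zh) zh \<le> du (d x zh) zh + D"
  shows "policy_mu c zh x \<le> policy_mu d zh x + ennreal D"
proof (cases "x > 0")
  case True
  have "ennreal (du (c x zh) zh) \<le> ennreal (du (d x zh) zh + D)"
    using cd True by (auto intro: ennreal_leI)
  also have "\<dots> = ennreal (du (d x zh) zh) + ennreal D"
    using True candC_D(3)[OF d] du_pos D by (intro ennreal_plus) (auto intro: less_imp_le)
  finally show ?thesis
    using True unfolding policy_mu_def by simp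
qed (simp add: policy_mu_def)

lemma policy_mu_tendsto:
  assumes c: "c \<in> candC du" and x: "x \<longlonglongrightarrow> x0" "\<And>n. x n \<ge> 0" "x0 \<ge> 0"
  shows "(\<lambda>n. policy_mu c zh (x n)) \<longlonglongrightarrow> policy_mu c zh x0"
proof (cases "x0 > 0")
  case True
  have pos: "eventually (\<lambda>n. x n \<in> {0<..}) sequentially"
    using order_tendstoD(1)[OF x(1) True] by simp
  have "(\<lambda>n. ennreal (du (c (x n) zh) zh)) \<longlonglongrightarrow> ennreal (du (c x0 zh) zh)"
    by (intro tendsto_ennrealI continuous_on_tendsto_compose[OF continuous_on_du_policy[OF c] x(1)])
      (use True pos in auto)
  moreover have "eventually (\<lambda>n. ennreal (du (c (x n) zh) zh) = policy_mu c zh (x n)) sequentially"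
    using pos by eventually_elim (auto simp: policy_mu_def)
  ultimately show ?thesis
    using True unfolding policy_mu_def[of c zh x0] by (auto intro: Lim_transform_eventually)
next
  case False
  then have "x0 = 0"
    using x by auto
  have "(\<lambda>n. policy_mu c zh (x n)) \<longlonglongrightarrow> top"
    unfolding tendsto_top_iff_ennreal
  proof (intro allI impI)
    fix l :: real
    assume "l \<ge> 0"
    obtain b where b: "b > 0" "\<And>y. 0 < y \<Longrightarrow> y < b \<Longrightarrow> l < du y zh"
      by (rule du_exceeds_near_0[of l zh]) blast
    have "eventually (\<lambda>n. x n < b) sequentially"
      using order_tendstoD(2)[OF x(1)] b \<open>x0 = 0\<close> by simp
    then show "eventually (\<lambda>n. ennreal l < policy_mu c zh (x n)) sequentially"
    proof eventually_elim
      case (elim n)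
      show ?case
      proof (cases "x n > 0")
        case True
        \<comment> \<open>\<open>c \<le> id\<close> gives \<open>du (c x) \<ge> du x\<close>, which is large for small \<open>x\<close>\<close>
        then have "du (x n) zh \<le> du (c (x n) zh) zh"
          using candC_D(3,4)[OF c] by (intro du_le) auto
        with b(2)[OF True elim] True \<open>l \<ge> 0\<close> show ?thesis
          by (simp add: policy_mu_def ennreal_less_iff)
      qed (simp add: policy_mu_def)
    qed
  qed
  with False show ?thesis
    by (simp add: policy_mu_def)
qed

lemma expected_mu_antimono:
  assumes c: "c \<in> candC du" and s: "0 \<le> s1" "s1 \<le> s2"
  shows "expected_mu c z s2 \<le> expected_mu c z s1"
  unfolding expected_mu_def
proof (intro cexp_mono mult_left_mono policy_mu_antimono[OF c])
  show "0 \<le> R z zh e * s1 + Y z zh e" for zh e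
    using R_nonneg Y_nonneg s by simp
  show "R z zh e * s1 + Y z zh e \<le> R z zh e * s2 + Y z zh e" for zh e
    using R_nonneg s by (simp add: mult_left_mono)
qed simp

definition K1 :: "'z \<Rightarrow> 'z \<Rightarrow> real" where
  "K1 z zh = P z zh * enn2real (\<integral>\<^sup>+ e. bR z zh e \<partial>pim)"

lemma K1_nonneg: "K1 z zh \<ge> 0"
  unfolding K1_def using P_nonneg by (simp add: enn2real_nonneg)

lemma Kmat_1_eq: "Kmat P pim beta R 1 = (\<chi> z zh. complex_of_real (K1 z zh))"
  unfolding Kmat_def K1_def using R_nonneg by (simp add: powr_one)

lemma ennreal_K1: "ennreal (P z zh) * (\<integral>\<^sup>+ e. bR z zh e \<partial>pim) = ennreal (K1 z zh)"
proof (cases "P z zh = 0")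
  case False
  then have "(\<integral>\<^sup>+ e. bR z zh e \<partial>pim) < \<infinity>"
    using P_nonneg[of z zh] by (intro discounted_return_finite) simp
  then show ?thesis
    using P_nonneg[of z zh] unfolding K1_def
    by (simp add: ennreal_mult enn2real_nonneg less_top)
qed (simp add: K1_def)

lemma cexp_bR_const:
  assumes "\<And>zh. D zh \<ge> 0"
  shows "cexp P pim z (\<lambda>zh e. bR z zh e * ennreal (D zh)) = ennreal (\<Sum>zh\<in>UNIV. K1 z zh * D zh)"
proof -
  have "cexp P pim z (\<lambda>zh e. bR z zh e * ennreal (D zh)) = (\<Sum>zh\<in>UNIV. ennreal (K1 z zh) * ennreal (D zh))"
    unfolding cexp_def
    by (intro sum.cong refl, subst nn_integral_multc[OF bR_measurable])
      (simp add: ennreal_K1 mult.assoc[symmetric])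
  also have "\<dots> = ennreal (\<Sum>zh\<in>UNIV. K1 z zh * D zh)"
    using assms K1_nonneg by (subst sum_ennreal[symmetric]) (auto simp: ennreal_mult intro!: sum.cong)
  finally show ?thesis .
qed

lemma expected_mu_0_finite:
  assumes c: "c \<in> candC du"
  shows "expected_mu c z 0 < \<infinity>"
proof -
  obtain M where M: "M \<ge> 0" "\<And>w z. w > 0 \<Longrightarrow> \<bar>du (c w z) z - du w z\<bar> \<le> M"
    using candC_mu_bound[OF c] by blast
  have "du (c x zh) zh \<le> du x zh + M" if "x > 0" for x zh
    using M(2)[OF that, of zh] by linarith
  then have "policy_mu c zh x \<le> policy_mu (\<lambda>x z. x) zh x + ennreal M" for zh x
    by (intro policy_mu_le_plus[OF id_in_candC M(1)])
  then have "expected_mu c z 0 \<le> cexp P pim z (\<lambda>zh e. bR z zh e * policy_mu (\<lambda>x z. x) zh (Y z zh e)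
        + bR z zh e * ennreal M)"
    unfolding expected_mu_def by (intro cexp_mono) (simp add: distrib_left[symmetric] mult_left_mono)
  also have "\<dots> = cexp P pim z (\<lambda>zh e. bR z zh e * ext_mu du (Y z zh e) zh)
        + ennreal (\<Sum>zh\<in>UNIV. K1 z zh * M)"
    using expected_mu_integrand_measurable[OF id_in_candC, of z _ 0] bR_measurable M(1)
    by (subst cexp_add) (auto simp: cexp_bR_const ext_mu_def policy_mu_def
        intro: borel_measurable_times_ennreal)
  also have "\<dots> < \<infinity>"
    using discounted_mu_income_finite[of z] by simp
  finally show ?thesis .
qed

lemma expected_mu_finite: "c \<in> candC du \<Longrightarrow> 0 \<le> s \<Longrightarrow> expected_mu c z s < \<infinity>"
  using expected_mu_antimono[of c 0 s z] expected_mu_0_finite[of c z] by auto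

lemma expected_mu_real: "c \<in> candC du \<Longrightarrow> 0 \<le> s \<Longrightarrow> expected_mu c z s = ennreal (enn2real (expected_mu c z s))"
  using expected_mu_finite by (simp add: less_top)

lemma expected_mu_tendsto:
  assumes c: "c \<in> candC du" and s: "s \<longlonglongrightarrow> s0" "\<And>n. s n \<ge> 0" "s0 \<ge> 0"
  shows "(\<lambda>n. expected_mu c z (s n)) \<longlonglongrightarrow> expected_mu c z s0"
  unfolding expected_mu_def cexp_def
proof (intro tendsto_sum)
  fix zh
  define f where "f s e = bR z zh e * policy_mu c zh (R z zh e * s + Y z zh e)" for s e
  show "(\<lambda>n. ennreal (P z zh) * integral\<^sup>N pim (f (s n))) \<longlonglongrightarrow> ennreal (P z zh) * integral\<^sup>N pim (f s0)"
  proof (cases "P z zh = 0")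
    case False
    have f_meas: "f t \<in> borel_measurable pim" for t
      unfolding f_def by (rule expected_mu_integrand_measurable[OF c])
    have "(\<lambda>n. integral\<^sup>N pim (f (s n))) \<longlonglongrightarrow> integral\<^sup>N pim (f s0)"
    proof (rule nn_integral_dominated_convergence[where w="f 0", OF f_meas f_meas f_meas])
      have "ennreal (P z zh) * integral\<^sup>N pim (f 0) < \<infinity>"
        using expected_mu_0_finite[OF c, of z]
        unfolding expected_mu_def cexp_def f_def by (simp add: ennreal_sum_less_top)
      then show "integral\<^sup>N pim (f 0) < \<infinity>"
        using False P_nonneg[of z zh] by (auto simp add: ennreal_mult_less_top top.not_eq_extremum)
      show "AE e in pim. f (s n) e \<le> f 0 e" for n
        unfolding f_def using R_nonneg Y_nonneg s(2)
        by (intro AE_I2 mult_left_mono policy_mu_antimono[OF c]) auto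
      show "AE e in pim. (\<lambda>n. f (s n) e) \<longlonglongrightarrow> f s0 e"
      proof (rule AE_I2)
        fix e
        show "(\<lambda>n. f (s n) e) \<longlonglongrightarrow> f s0 e"
        proof (cases "bR z zh e = 0")
          case False
          then show ?thesis
            unfolding f_def using R_nonneg Y_nonneg s
            by (intro tendsto_mult_ennreal tendsto_const policy_mu_tendsto[OF c] tendsto_intros) auto
        qed (simp add: f_def)
      qed
    qed
    then show ?thesis
      using False P_nonneg[of z zh] by (intro tendsto_mult_ennreal tendsto_const) auto
  qed simp
qed

lemma continuous_on_expected_mu:
  assumes c: "c \<in> candC du"
  shows "continuous_on {0..} (\<lambda>s. enn2real (expected_mu c z s))"
proof (rule continuous_on_sequentiallyI)
  fix s s0 assume s: "\<forall>n. s n \<in> {0::real..}" "s0 \<in> {0..}" "s \<longlonglongrightarrow> s0"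
  have "(\<lambda>n. expected_mu c z (s n)) \<longlonglongrightarrow> ennreal (enn2real (expected_mu c z s0))"
    using expected_mu_tendsto[OF c s(3)] s expected_mu_real[OF c, of s0 z] by auto
  then show "(\<lambda>n. enn2real (expected_mu c z (s n))) \<longlonglongrightarrow> enn2real (expected_mu c z s0)"
    by (rule tendsto_enn2real) simp
qed

lemma euler_solution_exists:
  assumes c: "c \<in> candC du" and w: "w > 0"
  obtains xi where "0 < xi" "xi \<le> w" "ennreal (du xi z) = max (expected_mu c z (w - xi)) (ennreal (du w z))"
proof -
  define h where "h xi = max (enn2real (expected_mu c z (w - xi))) (du w z)" for xi
  have "continuous_on {0<..w} h"
    unfolding h_def
    by (intro continuous_on_max continuous_on_const continuous_on_compose2[OF continuous_on_expected_mu[OF c]]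
        continuous_intros) auto
  moreover have "h xi \<le> enn2real (expected_mu c z 0) + du w z" if "xi \<le> w" for xi
  proof -
    have "expected_mu c z (w - xi) \<le> expected_mu c z 0"
      using that by (intro expected_mu_antimono[OF c]) auto
    then have "enn2real (expected_mu c z (w - xi)) \<le> enn2real (expected_mu c z 0)"
      using expected_mu_0_finite[OF c, of z] by (intro enn2real_mono) auto
    then show ?thesis
      unfolding h_def using du_pos[OF w, of z] by (simp add: enn2real_nonneg)
  qed
  ultimately obtain xi where xi: "0 < xi" "xi \<le> w" "du xi z = h xi"
    by (rule du_crosses[OF w]) (auto simp: h_def)
  have "ennreal (du xi z) = max (ennreal (enn2real (expected_mu c z (w - xi)))) (ennreal (du w z))"
    unfolding xi(3) h_def by (rule max_of_mono[OF monotone_ennreal, symmetric])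
  also have "\<dots> = max (expected_mu c z (w - xi)) (ennreal (du w z))"
    using expected_mu_real[OF c, of "w - xi" z] xi(2) by simp
  finally show ?thesis
    using xi by (intro that) auto
qed

lemma euler_solution_not_less:
  assumes c: "c \<in> candC du" and x: "0 < x1" "x1 < x2" "x2 \<le> w"
    and e1: "ennreal (du x1 z) = max (expected_mu c z (w - x1)) (ennreal (du w z))"
    and e2: "ennreal (du x2 z) = max (expected_mu c z (w - x2)) (ennreal (du w z))"
  shows False
proof -
  have "expected_mu c z (w - x1) \<le> expected_mu c z (w - x2)"
    using x by (intro expected_mu_antimono[OF c]) auto
  then have "ennreal (du x1 z) \<le> ennreal (du x2 z)"
    unfolding e1 e2 by (rule max.mono) simp
  then have "du x1 z \<le> du x2 z"
    using du_pos[of x2 z] x by (simp add: ennreal_le_iff)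
  with du_less[OF x(1,2), of z] show False by simp
qed

lemma euler_eq_ex1:
  assumes "c \<in> candC du" "w > 0"
  shows "\<exists>!xi. 0 < xi \<and> xi \<le> w \<and> euler_eq P pim beta R Y du c w z xi"
  unfolding euler_eq_iff
proof (rule ex_ex1I)
  show "\<exists>xi. 0 < xi \<and> xi \<le> w \<and> ennreal (du xi z) = max (expected_mu c z (w - xi)) (ennreal (du w z))"
    by (rule euler_solution_exists[OF assms, of z]) blast
  fix x1 x2
  assume "0 < x1 \<and> x1 \<le> w \<and> ennreal (du x1 z) = max (expected_mu c z (w - x1)) (ennreal (du w z))"
    and "0 < x2 \<and> x2 \<le> w \<and> ennreal (du x2 z) = max (expected_mu c z (w - x2)) (ennreal (du w z))"
  then show "x1 = x2"
    using euler_solution_not_less[OF assms(1), of x1 x2 w z] euler_solution_not_less[OF assms(1), of x2 x1 w z]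
    by (meson linorder_neqE_linordered_idom)
qed

lemma Top:
  assumes "c \<in> candC du" "w > 0"
  shows "0 < T c w z" "T c w z \<le> w"
    "ennreal (du (T c w z) z) = max (expected_mu c z (w - T c w z)) (ennreal (du w z))"
  using theI'[OF euler_eq_ex1[OF assms, of z]] unfolding Top_def euler_eq_iff by auto

lemma du_Top_le_expected_mu:
  assumes c: "c \<in> candC du" and w: "w > 0" and "T c w z < w"
  shows "ennreal (du (T c w z) z) \<le> expected_mu c z (w - T c w z)"
proof -
  have "du w z < du (T c w z) z"
    using du_less[OF Top(1)[OF c w] assms(3)] .
  then have "ennreal (du w z) < ennreal (du (T c w z) z)"
    using du_pos[OF w, of z] by (simp add: ennreal_less_iff)
  with Top(3)[OF c w, of z] show ?thesis
    by (auto simp: max_def split: if_splits)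
qed

lemma Top_ge_of_savings_ge:
  assumes c: "c \<in> candC du" and w: "0 < w1" "0 < w2" and "T c w1 z < w1"
    and savings: "w2 - T c w2 z \<le> w1 - T c w1 z"
  shows "T c w2 z \<le> T c w1 z"
proof -
  note Tw1 = Top[OF c w(1), of z] and Tw2 = Top[OF c w(2), of z]
  have "ennreal (du (T c w1 z) z) \<le> expected_mu c z (w1 - T c w1 z)"
    by (rule du_Top_le_expected_mu[OF c w(1) assms(4)])
  also have "\<dots> \<le> expected_mu c z (w2 - T c w2 z)"
    using Tw2 savings by (intro expected_mu_antimono[OF c]) auto
  also have "\<dots> \<le> ennreal (du (T c w2 z) z)"
    unfolding Tw2(3) by simp
  finally have "du (T c w1 z) z \<le> du (T c w2 z) z"
    using du_pos[OF Tw2(1), of z] by (simp add: ennreal_le_iff)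
  with Tw1(1) Tw2(1) show ?thesis
    by (simp add: du_le_iff)
qed

lemma Top_mono:
  assumes c: "c \<in> candC du" and w: "0 < w1" "w1 \<le> w2"
  shows "T c w1 z \<le> T c w2 z"
proof (rule ccontr)
  assume "\<not> T c w1 z \<le> T c w2 z"
  moreover have "T c w1 z \<le> w1"
    using Top(2)[OF c w(1)] .
  ultimately show False
    using Top_ge_of_savings_ge[OF c _ w(1), of w2 z] w by linarith
qed

lemma Top_savings_mono:
  assumes c: "c \<in> candC du" and w: "0 < w1" "w1 \<le> w2"
  shows "w1 - T c w1 z \<le> w2 - T c w2 z"
proof (rule ccontr)
  assume "\<not> ?thesis"
  moreover have "T c w2 z \<le> w2"
    using Top(2)[OF c] w by simp
  ultimately show False
    using Top_ge_of_savings_ge[OF c w(1), of w2 z] w by linarith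
qed

lemma continuous_on_Top:
  assumes c: "c \<in> candC du"
  shows "continuous_on {0<..} (\<lambda>w. T c w z)"
proof (rule lipschitz_on_continuous_on[OF lipschitz_onI])
  fix w1 w2 :: real
  assume "w1 \<in> {0<..}" "w2 \<in> {0<..}"
  then show "dist (T c w1 z) (T c w2 z) \<le> 1 * dist w1 w2"
    using Top_mono[OF c, of w1 w2 z] Top_savings_mono[OF c, of w1 w2 z]
      Top_mono[OF c, of w2 w1 z] Top_savings_mono[OF c, of w2 w1 z]
    by (cases "w1 \<le> w2") (auto simp: dist_real_def)
qed simp

lemma du_Top_bound:
  assumes c: "c \<in> candC du" and w: "w > 0"
  shows "\<bar>du (T c w z) z - du w z\<bar> \<le> enn2real (expected_mu c z 0)"
proof -
  note Tw = Top[OF c w, of z]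
  have "ennreal (du (T c w z) z) \<le> expected_mu c z (w - T c w z) + ennreal (du w z)"
    unfolding Tw(3) by (intro max.boundedI add_increasing2 add_increasing) auto
  also have "\<dots> \<le> expected_mu c z 0 + ennreal (du w z)"
    using Tw by (intro add_right_mono expected_mu_antimono[OF c]) auto
  also have "\<dots> = ennreal (enn2real (expected_mu c z 0) + du w z)"
    using expected_mu_real[OF c, of 0 z] du_pos[OF w, of z]
    by (subst ennreal_plus) (auto simp: enn2real_nonneg)
  finally have "du (T c w z) z \<le> enn2real (expected_mu c z 0) + du w z"
    using du_pos[OF w, of z] by (subst (asm) ennreal_le_iff) (auto simp: enn2real_nonneg)
  moreover have "du w z \<le> du (T c w z) z"
    using Tw by (intro du_le) auto
  ultimately show ?thesis by linarith
qed

lemma Top_in_candC: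
  assumes c: "c \<in> candC du"
  shows "T c \<in> candC du"
proof -
  have "enn2real (expected_mu c z 0) \<le> (\<Sum>z\<in>UNIV. enn2real (expected_mu c z 0))" for z
    by (rule member_le_sum) (auto simp: enn2real_nonneg)
  then have "\<forall>w z. 0 < w \<longrightarrow> \<bar>du (T c w z) z - du w z\<bar> \<le> (\<Sum>z\<in>UNIV. enn2real (expected_mu c z 0))"
    using du_Top_bound[OF c] order_trans by blast
  moreover have "\<forall>z. mono_on {0<..} (\<lambda>w. T c w z)"
    using Top_mono[OF c] by (auto intro!: mono_onI)
  ultimately show ?thesis
    unfolding candC_def using continuous_on_Top[OF c] Top[OF c] by blast
qed

lemma iterates_in_candC: "c \<in> candC du \<Longrightarrow> (T ^^ n) c \<in> candC du"
  by (induction n) (auto intro: Top_in_candC)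

lemma Top_cong: "(\<And>x z. x > 0 \<Longrightarrow> c x z = d x z) \<Longrightarrow> T c = T d"
  unfolding Top_def euler_eq_def Let_def by (simp cong: if_cong)

lemma iterates_fixed_point:
  assumes "\<And>x z. x > 0 \<Longrightarrow> T c x z = c x z" and "x > 0"
  shows "(T ^^ n) c x z = c x z"
  using assms(2)
proof (induction n arbitrary: x z)
  case (Suc n)
  then have "T ((T ^^ n) c) = T c"
    by (intro Top_cong) simp
  with assms(1) Suc.prems show ?case by simp
qed simp

text \<open>If \<open>u'(Tc) > u'(Td)\<close> at \<open>w\<close>, then \<open>Tc < Td \<le> w\<close>: the Euler equation for \<open>Tc\<close> binds at
  the expectation term, which is evaluated at larger savings than the one for \<open>Td\<close>.\<close>
lemma du_Top_le_plus:
  assumes c: "c \<in> candC du" and d: "d \<in> candC du" and D: "\<And>zh. D zh \<ge> 0"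
    and cd: "\<And>x zh. x > 0 \<Longrightarrow> du (c x zh) zh \<le> du (d x zh) zh + D zh" and w: "w > 0"
  shows "du (T c w z) z \<le> du (T d w z) z + (\<Sum>zh\<in>UNIV. K1 z zh * D zh)"
proof (cases "du (T c w z) z \<le> du (T d w z) z")
  case True
  moreover have "(\<Sum>zh\<in>UNIV. K1 z zh * D zh) \<ge> 0"
    using K1_nonneg D by (intro sum_nonneg) auto
  ultimately show ?thesis by linarith
next
  case False
  note Tc = Top[OF c w, of z] and Td = Top[OF d w, of z]
  have KD_nonneg: "0 \<le> (\<Sum>zh\<in>UNIV. K1 z zh * D zh)"
    using K1_nonneg D by (intro sum_nonneg) auto
  have less: "T c w z < T d w z"
    using False du_le[OF Td(1), of "T c w z" z] by linarith
  have shift: "policy_mu c zh x \<le> policy_mu d zh x + ennreal (D zh)" for zh x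
    by (rule policy_mu_le_plus[OF d D]) (rule cd)
  have "ennreal (du (T c w z) z) \<le> expected_mu c z (w - T c w z)"
    using less Td(2) by (intro du_Top_le_expected_mu[OF c w]) auto
  also have "\<dots> \<le> cexp P pim z (\<lambda>zh e. bR z zh e * policy_mu d zh (R z zh e * (w - T c w z) + Y z zh e)
      + bR z zh e * ennreal (D zh))"
    unfolding expected_mu_def using shift
    by (intro cexp_mono) (simp add: distrib_left[symmetric] mult_left_mono)
  also have "\<dots> = expected_mu d z (w - T c w z) + ennreal (\<Sum>zh\<in>UNIV. K1 z zh * D zh)"
    unfolding expected_mu_def cexp_bR_const[OF D, symmetric]
    by (rule cexp_add) (auto intro: expected_mu_integrand_measurable[OF d]
        borel_measurable_times_ennreal bR_measurable)
  also have "\<dots> \<le> expected_mu d z (w - T d w z) + ennreal (\<Sum>zh\<in>UNIV. K1 z zh * D zh)"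
    using less Td by (intro add_right_mono expected_mu_antimono[OF d]) auto
  also have "\<dots> \<le> ennreal (du (T d w z) z) + ennreal (\<Sum>zh\<in>UNIV. K1 z zh * D zh)"
    unfolding Td(3) by (intro add_right_mono) simp
  also have "\<dots> = ennreal (du (T d w z) z + (\<Sum>zh\<in>UNIV. K1 z zh * D zh))"
    using du_pos[OF Td(1), of z] KD_nonneg by (simp add: ennreal_plus)
  finally show ?thesis
    using du_pos[OF Td(1), of z] KD_nonneg by (subst (asm) ennreal_le_iff) auto
qed

lemma du_Top_diff_le:
  assumes c: "c \<in> candC du" and d: "d \<in> candC du" and D: "\<And>zh. D zh \<ge> 0"
    and cd: "\<And>x zh. x > 0 \<Longrightarrow> \<bar>du (c x zh) zh - du (d x zh) zh\<bar> \<le> D zh" and w: "w > 0"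
  shows "\<bar>du (T c w z) z - du (T d w z) z\<bar> \<le> (\<Sum>zh\<in>UNIV. K1 z zh * D zh)"
proof -
  have cd1: "du (c x zh) zh \<le> du (d x zh) zh + D zh" and dc1: "du (d x zh) zh \<le> du (c x zh) zh + D zh"
    if "x > 0" for x zh
    using cd[OF that, of zh] by linarith+
  show ?thesis
    using du_Top_le_plus[OF c d D cd1 w, of z] du_Top_le_plus[OF d c D dc1 w, of z] by linarith
qed

end

section \<open>Contraction and the fixed point\<close>

text \<open>A positive vector \<open>v\<close> with \<open>K(1) v \<le> \<theta> v\<close>, \<open>\<theta> < 1\<close>, makes \<open>T\<close> a contraction for the
  \<open>v\<close>-weighted sup distance between marginal utilities.\<close>
locale income_fluctuation_contraction = income_fluctuation P pim beta R Y du
  for P :: "'z::finite \<Rightarrow> 'z \<Rightarrow> real" and pim :: "'e measure"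
    and beta R Y :: "'z \<Rightarrow> 'z \<Rightarrow> 'e \<Rightarrow> real" and du :: "real \<Rightarrow> 'z \<Rightarrow> real" +
  fixes v :: "'z \<Rightarrow> real" and \<theta> :: real
  assumes v_pos: "\<And>z. v z > 0" and \<theta>_less_1: "\<theta> < 1"
    and subinvariant:
      "\<And>z. (\<Sum>zh\<in>UNIV. P z zh * enn2real (\<integral>\<^sup>+ e. ennreal (beta z zh e * R z zh e) \<partial>pim) * v zh) \<le> \<theta> * v z"
begin

lemma K1_subinvariant: "(\<Sum>zh\<in>UNIV. K1 z zh * v zh) \<le> \<theta> * v z"
  unfolding K1_def by (rule subinvariant)

lemma \<theta>_nonneg: "0 \<le> \<theta>"
proof -
  fix z
  have "0 \<le> (\<Sum>zh\<in>UNIV. K1 z zh * v zh)"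
    by (intro sum_nonneg mult_nonneg_nonneg K1_nonneg less_imp_le v_pos)
  then have "0 \<le> \<theta> * v z"
    using K1_subinvariant[of z] by linarith
  then show ?thesis
    using v_pos[of z] by (simp add: zero_le_mult_iff)
qed

definition mu_close :: "real \<Rightarrow> (real \<Rightarrow> 'z \<Rightarrow> real) \<Rightarrow> (real \<Rightarrow> 'z \<Rightarrow> real) \<Rightarrow> bool" where
  "mu_close C c d \<longleftrightarrow> (\<forall>x>0. \<forall>z. \<bar>du (c x z) z - du (d x z) z\<bar> \<le> C * v z)"

lemma mu_closeI: "(\<And>x z. x > 0 \<Longrightarrow> \<bar>du (c x z) z - du (d x z) z\<bar> \<le> C * v z) \<Longrightarrow> mu_close C c d"
  unfolding mu_close_def by blast

lemma mu_closeD: "mu_close C c d \<Longrightarrow> x > 0 \<Longrightarrow> \<bar>du (c x z) z - du (d x z) z\<bar> \<le> C * v z"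
  unfolding mu_close_def by blast

lemma mu_close_sym: "mu_close C c d \<Longrightarrow> mu_close C d c"
  unfolding mu_close_def by (simp add: abs_minus_commute)

lemma mu_close_trans:
  assumes "mu_close C1 c d" "mu_close C2 d e"
  shows "mu_close (C1 + C2) c e"
proof (rule mu_closeI)
  fix x :: real and z
  assume "x > 0"
  with assms show "\<bar>du (c x z) z - du (e x z) z\<bar> \<le> (C1 + C2) * v z"
    using mu_closeD[OF assms(1), of x z] mu_closeD[OF assms(2), of x z]
    unfolding distrib_right by linarith
qed

lemma mu_close_cong:
  "mu_close C c d \<Longrightarrow> (\<And>x z. x > 0 \<Longrightarrow> c' x z = c x z) \<Longrightarrow> (\<And>x z. x > 0 \<Longrightarrow> d' x z = d x z)
    \<Longrightarrow> mu_close C c' d'"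
  unfolding mu_close_def by simp

lemma mu_close_exists:
  assumes c: "c \<in> candC du" and d: "d \<in> candC du"
  obtains C where "C \<ge> 0" "mu_close C c d"
proof -
  obtain M1 where M1: "M1 \<ge> 0" "\<And>w z. w > 0 \<Longrightarrow> \<bar>du (c w z) z - du w z\<bar> \<le> M1"
    using candC_mu_bound[OF c] by blast
  obtain M2 where M2: "M2 \<ge> 0" "\<And>w z. w > 0 \<Longrightarrow> \<bar>du (d w z) z - du w z\<bar> \<le> M2"
    using candC_mu_bound[OF d] by blast
  define vmin where "vmin = Min (range v)"
  have vmin: "vmin > 0" "vmin \<le> v z" for z
    unfolding vmin_def using v_pos by auto
  show ?thesis
  proof (rule that[of "(M1 + M2) / vmin"])
    show "(M1 + M2) / vmin \<ge> 0"
      using M1 M2 vmin by simp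
    show "mu_close ((M1 + M2) / vmin) c d"
    proof (rule mu_closeI)
      fix x :: real and z
      assume x: "x > 0"
      have "\<bar>du (c x z) z - du (d x z) z\<bar> \<le> ((M1 + M2) / vmin) * vmin"
        using M1(2)[OF x, of z] M2(2)[OF x, of z] vmin by simp
      also have "\<dots> \<le> ((M1 + M2) / vmin) * v z"
        using vmin M1 M2 by (intro mult_left_mono) auto
      finally show "\<bar>du (c x z) z - du (d x z) z\<bar> \<le> (M1 + M2) / vmin * v z" .
    qed
  qed
qed

lemma mu_close_Top:
  assumes c: "c \<in> candC du" and d: "d \<in> candC du" and C: "C \<ge> 0" and cd: "mu_close C c d"
  shows "mu_close (C * \<theta>) (T c) (T d)"
proof (rule mu_closeI)
  fix w :: real and z
  assume w: "w > 0"
  have "\<bar>du (T c w z) z - du (T d w z) z\<bar> \<le> (\<Sum>zh\<in>UNIV. K1 z zh * (C * v zh))"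
  proof (rule du_Top_diff_le[OF c d _ _ w])
    show "0 \<le> C * v zh" for zh
      using C v_pos[of zh] by simp
  qed (rule mu_closeD[OF cd])
  also have "\<dots> = C * (\<Sum>zh\<in>UNIV. K1 z zh * v zh)"
    by (simp add: sum_distrib_left mult_ac)
  also have "\<dots> \<le> C * \<theta> * v z"
    using K1_subinvariant C by (simp add: mult_left_mono mult.assoc)
  finally show "\<bar>du (T c w z) z - du (T d w z) z\<bar> \<le> C * \<theta> * v z" .
qed

lemma mu_close_iterates:
  assumes c: "c \<in> candC du" and d: "d \<in> candC du" and C: "C \<ge> 0" and cd: "mu_close C c d"
  shows "mu_close (C * \<theta>^n) ((T ^^ n) c) ((T ^^ n) d)"
proof (induction n)
  case (Suc n)
  then show ?case
    using mu_close_Top[OF iterates_in_candC[OF c] iterates_in_candC[OF d], of "C * \<theta>^n" n]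
      C \<theta>_nonneg by (simp add: mult_ac)
qed (simp add: cd)

lemma mu_close_geometric_imp_eq:
  assumes c: "c \<in> candC du" and d: "d \<in> candC du"
    and close: "\<And>n. mu_close (B * \<theta>^n) c d" and x: "x > 0"
  shows "c x z = d x z"
proof -
  have "\<bar>du (c x z) z - du (d x z) z\<bar> \<le> B * v z * \<theta>^n" for n
    using mu_closeD[OF close[of n] x, of z] by (simp add: mult_ac)
  then have "du (c x z) z - du (d x z) z = 0"
    by (rule abs_le_geometric_imp_zero[OF \<theta>_nonneg \<theta>_less_1])
  then show ?thesis
    using du_inject[OF candC_D(3)[OF c x] candC_D(3)[OF d x]] by simp
qed

lemma mu_close_uniform_bound:
  assumes "mu_close C c d" "C \<ge> 0" "x > 0"
  shows "\<bar>du (c x z) z - du (d x z) z\<bar> \<le> C * (\<Sum>z\<in>UNIV. v z)"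
proof -
  have "v z \<le> (\<Sum>z\<in>UNIV. v z)"
    by (rule member_le_sum) (auto intro: less_imp_le v_pos)
  then show ?thesis
    using mu_closeD[OF assms(1,3), of z] mult_left_mono[OF _ assms(2), of "v z"] by fastforce
qed

lemma rho_le:
  assumes "mu_close C c d" "C \<ge> 0"
  shows "0 \<le> rho du c d" "rho du c d \<le> C * (\<Sum>z\<in>UNIV. v z)"
proof -
  note bound = mu_close_uniform_bound[OF assms]
  show "rho du c d \<le> C * (\<Sum>z\<in>UNIV. v z)"
    unfolding rho_def by (rule cSUP_least) (auto intro: bound)
  show "0 \<le> rho du c d"
    unfolding rho_def
    by (rule cSUP_upper2[where x="(1, undefined)"], rule bdd_aboveI2[where M="C * (\<Sum>z\<in>UNIV. v z)"])
      (auto intro: bound)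
qed

definition iter_id :: "nat \<Rightarrow> real \<Rightarrow> 'z \<Rightarrow> real" where
  "iter_id n = (T ^^ n) (\<lambda>x z. x)"

lemma iter_id_in_candC: "iter_id n \<in> candC du"
  unfolding iter_id_def by (rule iterates_in_candC[OF id_in_candC])

lemma du_iter_id_increments:
  "\<exists>C\<ge>0. \<forall>n x z. x > 0 \<longrightarrow> \<bar>du (iter_id (Suc n) x z) z - du (iter_id n x z) z\<bar> \<le> C * v z * \<theta>^n"
proof -
  obtain C where C: "C \<ge> 0" "mu_close C (T (\<lambda>x z. x)) (\<lambda>x z. x)"
    using mu_close_exists[OF Top_in_candC[OF id_in_candC] id_in_candC] by blast
  have "iter_id (Suc n) = (T ^^ n) (T (\<lambda>x z. x))" for n
    unfolding iter_id_def by (simp only: funpow_Suc_right comp_def)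
  then have close: "mu_close (C * \<theta>^n) (iter_id (Suc n)) (iter_id n)" for n
    using mu_close_iterates[OF Top_in_candC[OF id_in_candC] id_in_candC C] by (simp add: iter_id_def)
  have "\<bar>du (iter_id (Suc n) x z) z - du (iter_id n x z) z\<bar> \<le> C * v z * \<theta>^n" if "x > 0" for n x z
    using mu_closeD[OF close[of n] that, of z] by (simp add: mult_ac)
  with C(1) show ?thesis
    by blast
qed

definition mu_limit :: "real \<Rightarrow> 'z \<Rightarrow> real" where
  "mu_limit x z = lim (\<lambda>n. du (iter_id n x z) z)"

lemma LIMSEQ_mu_limit:
  assumes "x > 0"
  shows "(\<lambda>n. du (iter_id n x z) z) \<longlonglongrightarrow> mu_limit x z"
proof -
  obtain C where "\<forall>n x z. x > 0 \<longrightarrow> \<bar>du (iter_id (Suc n) x z) z - du (iter_id n x z) z\<bar> \<le> C * v z * \<theta>^n"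
    using du_iter_id_increments by blast
  with assms show ?thesis
    unfolding mu_limit_def by (intro geometric_increments_limit(1)[OF \<theta>_nonneg \<theta>_less_1]) blast
qed

lemma mu_limit_bound:
  "\<exists>C\<ge>0. \<forall>n x z. x > 0 \<longrightarrow> \<bar>du (iter_id n x z) z - mu_limit x z\<bar> \<le> C * \<theta>^n * v z"
proof -
  obtain C where C: "C \<ge> 0"
    "\<And>n x z. x > 0 \<Longrightarrow> \<bar>du (iter_id (Suc n) x z) z - du (iter_id n x z) z\<bar> \<le> C * v z * \<theta>^n"
    using du_iter_id_increments by blast
  have "\<bar>du (iter_id n x z) z - mu_limit x z\<bar> \<le> C / (1 - \<theta>) * \<theta>^n * v z" if "x > 0" for n x z
    using geometric_increments_limit(2)[OF \<theta>_nonneg \<theta>_less_1 C(2)[OF that]]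
    unfolding mu_limit_def by (simp add: field_simps)
  with C(1) \<theta>_less_1 show ?thesis
    by (intro exI[of _ "C / (1 - \<theta>)"]) auto
qed

lemma du_le_mu_limit:
  assumes x: "x > 0"
  shows "du x z \<le> mu_limit x z"
  using candC_D(3,4)[OF iter_id_in_candC] x
  by (intro LIMSEQ_le_const[OF LIMSEQ_mu_limit[OF x]] exI[of _ 0] allI impI du_le) auto

lemma mu_limit_antimono:
  assumes x: "0 < x1" "x1 \<le> x2"
  shows "mu_limit x2 z \<le> mu_limit x1 z"
proof -
  have "du (iter_id n x2 z) z \<le> du (iter_id n x1 z) z" for n
    by (rule du_le[OF candC_D(3)[OF iter_id_in_candC x(1)] candC_mono[OF iter_id_in_candC x]])
  moreover have "x2 > 0"
    using x by simp
  ultimately show ?thesis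
    by (intro LIMSEQ_le[OF LIMSEQ_mu_limit LIMSEQ_mu_limit[OF x(1)]]) blast+
qed

lemma continuous_on_mu_limit: "continuous_on {0<..} (\<lambda>x. mu_limit x z)"
proof -
  obtain C where C: "C \<ge> 0" "\<And>n x z. x > 0 \<Longrightarrow> \<bar>du (iter_id n x z) z - mu_limit x z\<bar> \<le> C * \<theta>^n * v z"
    using mu_limit_bound by blast
  have "(\<lambda>n. C * \<theta>^n * v z) \<longlonglongrightarrow> 0"
    using \<theta>_nonneg \<theta>_less_1
    by (intro tendsto_mult_left_zero tendsto_mult_right_zero LIMSEQ_power_zero) auto
  then have unif: "uniform_limit {0<..} (\<lambda>n x. du (iter_id n x z) z) (\<lambda>x. mu_limit x z) sequentially"
  proof (intro uniform_limitI)
    fix e :: real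
    assume "(\<lambda>n. C * \<theta>^n * v z) \<longlonglongrightarrow> 0" "e > 0"
    then have "eventually (\<lambda>n. C * \<theta>^n * v z < e) sequentially"
      by (rule order_tendstoD(2))
    then show "\<forall>\<^sub>F n in sequentially. \<forall>x\<in>{0<..}. dist (du (iter_id n x z) z) (mu_limit x z) < e"
    proof eventually_elim
      case (elim n)
      show ?case
      proof
        fix x :: real
        assume "x \<in> {0<..}"
        then have "\<bar>du (iter_id n x z) z - mu_limit x z\<bar> \<le> C * \<theta>^n * v z"
          by (intro C(2)) simp
        with elim show "dist (du (iter_id n x z) z) (mu_limit x z) < e"
          by (simp add: dist_real_def)
      qed
    qed
  qed
  have "\<forall>\<^sub>F n in sequentially. continuous_on {0<..} (\<lambda>x. du (iter_id n x z) z)"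
    by (intro always_eventually allI continuous_on_du_policy iter_id_in_candC)
  then show ?thesis
    by (rule uniform_limit_theorem[OF _ unif]) simp
qed

definition cstar :: "real \<Rightarrow> 'z \<Rightarrow> real" where
  "cstar x z = du_inv z (mu_limit x z)"

lemma cstar:
  assumes x: "x > 0"
  shows "0 < cstar x z" "cstar x z \<le> x" "du (cstar x z) z = mu_limit x z"
proof -
  obtain t where t: "0 < t" "t \<le> x" "du t z = mu_limit x z"
    by (rule du_crosses[OF x continuous_on_const _ du_le_mu_limit[OF x]]) auto
  then have "cstar x z = t"
    unfolding cstar_def using du_inv_du[OF t(1), of z] by simp
  with t show "0 < cstar x z" "cstar x z \<le> x" "du (cstar x z) z = mu_limit x z"
    by auto
qed

lemma mu_close_iter_id_cstar: "\<exists>C\<ge>0. \<forall>n. mu_close (C * \<theta>^n) (iter_id n) cstar"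
proof -
  obtain C where C: "C \<ge> 0" "\<And>n x z. x > 0 \<Longrightarrow> \<bar>du (iter_id n x z) z - mu_limit x z\<bar> \<le> C * \<theta>^n * v z"
    using mu_limit_bound by blast
  have "mu_close (C * \<theta>^n) (iter_id n) cstar" for n
    by (rule mu_closeI) (simp add: cstar(3) C(2))
  with C(1) show ?thesis
    by blast
qed

lemma cstar_in_candC: "cstar \<in> candC du"
proof -
  have "continuous_on {0<..} (\<lambda>x. cstar x z)" for z
    unfolding cstar_def
    by (rule continuous_on_compose2[OF continuous_on_du_inv continuous_on_mu_limit])
      (auto simp: cstar(3)[symmetric] intro: cstar(1))
  moreover have "mono_on {0<..} (\<lambda>x. cstar x z)" for z
  proof (rule mono_onI)
    fix x1 x2 :: real
    assume "x1 \<in> {0<..}" "x2 \<in> {0<..}" "x1 \<le> x2"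
    then have "du (cstar x2 z) z \<le> du (cstar x1 z) z"
      using mu_limit_antimono[of x1 x2 z] by (simp add: cstar(3))
    with \<open>x1 \<in> {0<..}\<close> \<open>x2 \<in> {0<..}\<close> show "cstar x1 z \<le> cstar x2 z"
      using du_le_iff[of "cstar x2 z" "cstar x1 z" z] cstar(1)[of x1 z] cstar(1)[of x2 z] by simp
  qed
  moreover obtain C where C: "C \<ge> 0" "\<And>n. mu_close (C * \<theta>^n) (iter_id n) cstar"
    using mu_close_iter_id_cstar by blast
  then have "\<bar>du (cstar w z) z - du w z\<bar> \<le> C * (\<Sum>z\<in>UNIV. v z)" if "w > 0" for w z
    using mu_close_uniform_bound[OF mu_close_sym[OF C(2)[of 0]] _ that, of z] C(1)
    by (simp add: iter_id_def)
  ultimately show ?thesis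
    unfolding candC_def using cstar by blast
qed

lemma Top_cstar:
  assumes x: "x > 0"
  shows "T cstar x z = cstar x z"
proof -
  obtain C where C: "C \<ge> 0" "\<And>n. mu_close (C * \<theta>^n) (iter_id n) cstar"
    using mu_close_iter_id_cstar by blast
  have "mu_close ((C * \<theta>) * \<theta>^n + C * \<theta>^Suc n) (T cstar) cstar" for n
  proof (rule mu_close_trans)
    show "mu_close (C * \<theta> * \<theta>^n) (T cstar) (iter_id (Suc n))"
      using mu_close_Top[OF cstar_in_candC iter_id_in_candC _ mu_close_sym[OF C(2)], of n] C(1) \<theta>_nonneg
      by (simp add: iter_id_def mult_ac)
    show "mu_close (C * \<theta>^Suc n) (iter_id (Suc n)) cstar"
      by (rule C(2))
  qed
  then have "mu_close ((2 * C * \<theta>) * \<theta>^n) (T cstar) cstar" for n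
    by (simp add: algebra_simps)
  then show ?thesis
    by (rule mu_close_geometric_imp_eq[OF Top_in_candC[OF cstar_in_candC] cstar_in_candC _ x])
qed

lemma fixed_point_unique:
  assumes c: "c \<in> candC du" and fixed: "\<And>x z. x > 0 \<Longrightarrow> T c x z = c x z" and x: "x > 0"
  shows "c x z = cstar x z"
proof -
  obtain C where C: "C \<ge> 0" "mu_close C c cstar"
    using mu_close_exists[OF c cstar_in_candC] by blast
  have "mu_close (C * \<theta>^n) c cstar" for n
    by (rule mu_close_cong[OF mu_close_iterates[OF c cstar_in_candC C]])
      (simp_all add: iterates_fixed_point[OF fixed] iterates_fixed_point[OF Top_cstar])
  then show ?thesis
    by (rule mu_close_geometric_imp_eq[OF c cstar_in_candC _ x])
qed

lemma iterates_converge: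
  assumes c: "c \<in> candC du"
  shows "(\<lambda>k. rho du ((T ^^ k) c) cstar) \<longlonglongrightarrow> 0"
proof -
  obtain C where C: "C \<ge> 0" "mu_close C c cstar"
    using mu_close_exists[OF c cstar_in_candC] by blast
  have close: "mu_close (C * \<theta>^k) ((T ^^ k) c) cstar" for k
    by (rule mu_close_cong[OF mu_close_iterates[OF c cstar_in_candC C]])
      (simp_all add: iterates_fixed_point[OF Top_cstar])
  have "0 \<le> C * \<theta>^k" for k
    using C(1) \<theta>_nonneg by simp
  note bounds = rho_le[OF close this]
  have "(\<lambda>k. C * \<theta>^k * (\<Sum>z\<in>UNIV. v z)) \<longlonglongrightarrow> 0"
    using \<theta>_nonneg \<theta>_less_1
    by (intro tendsto_mult_left_zero tendsto_mult_right_zero LIMSEQ_power_zero) auto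
  from tendsto_sandwich[OF always_eventually always_eventually tendsto_const this]
  show ?thesis
    by (simp add: bounds)
qed

end

theorem theorem2p1:
  fixes P :: "'z::finite \<Rightarrow> 'z \<Rightarrow> real"
    and pim :: "'e measure"
    and beta R Y :: "'z \<Rightarrow> 'z \<Rightarrow> 'e \<Rightarrow> real"
    and u du ddu :: "real \<Rightarrow> 'z \<Rightarrow> real"
  assumes P_nonneg: "\<And>z zh. P z zh \<ge> 0"
    and P_stoch: "\<And>z. (\<Sum>zh\<in>UNIV. P z zh) = 1"
    and pi_prob: "prob_space pim"
    and beta_meas: "\<And>z zh. beta z zh \<in> borel_measurable pim"
    and R_meas: "\<And>z zh. R z zh \<in> borel_measurable pim"
    and Y_meas: "\<And>z zh. Y z zh \<in> borel_measurable pim"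
    and beta_nonneg: "\<And>z zh e. beta z zh e \<ge> 0"
    and R_nonneg: "\<And>z zh e. R z zh e \<ge> 0"
    and Y_nonneg: "\<And>z zh e. Y z zh e \<ge> 0"
    \<comment> \<open>Assumption 1\<close>
    and u_deriv: "\<And>c z. c > 0 \<Longrightarrow> ((\<lambda>x. u x z) has_real_derivative du c z) (at c)"
    and du_deriv: "\<And>c z. c > 0 \<Longrightarrow> ((\<lambda>x. du x z) has_real_derivative ddu c z) (at c)"
    and du_pos: "\<And>c z. c > 0 \<Longrightarrow> du c z > 0"
    and ddu_neg: "\<And>c z. c > 0 \<Longrightarrow> ddu c z < 0"
    and du_at0: "\<And>z. filterlim (\<lambda>c. du c z) at_top (at_right 0)"
    and du_atinf: "\<And>z. \<exists>L. ((\<lambda>c. du c z) \<longlongrightarrow> L) at_top \<and> L < 1"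
    \<comment> \<open>Assumption 2(a)\<close>
    and A2a1: "\<And>z. cexp P pim z (\<lambda>zh e. ext_mu du (Y z zh e) zh) < \<infinity>"
    and A2a2: "\<And>z. cexp P pim z (\<lambda>zh e. ennreal (beta z zh e * R z zh e) * ext_mu du (Y z zh e) zh) < \<infinity>"
    \<comment> \<open>Assumption 2(b): K(1) has finite entries and spectral radius < 1\<close>
    and K_fin: "\<And>z zh. P z zh > 0 \<Longrightarrow> (\<integral>\<^sup>+ e. ennreal (beta z zh e * R z zh e powr 1) \<partial>pim) < \<infinity>"
    and A2b: "spectral_radius (Kmat P pim beta R 1) < 1"
  shows "(\<forall>c\<in>candC du. \<forall>w>0. \<forall>z. \<exists>!xi. 0 < xi \<and> xi \<le> w \<and> euler_eq P pim beta R Y du c w z xi)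
    \<and> (\<forall>c\<in>candC du. Top P pim beta R Y du c \<in> candC du)
    \<and> (\<exists>cs\<in>candC du.
          (\<forall>w>0. \<forall>z. Top P pim beta R Y du cs w z = cs w z)
        \<and> (\<forall>c\<in>candC du. (\<forall>w>0. \<forall>z. Top P pim beta R Y du c w z = c w z) \<longrightarrow> (\<forall>w>0. \<forall>z. c w z = cs w z))
        \<and> (\<forall>c\<in>candC du. (\<lambda>k. rho du ((Top P pim beta R Y du ^^ k) c) cs) \<longlonglongrightarrow> 0))"
proof -
  have du_cont: "continuous_on {0<..} (\<lambda>c. du c z)" for z
    using DERIV_isCont[OF du_deriv] by (intro continuous_at_imp_continuous_on) auto
  have du_less: "du b z < du a z" if "0 < a" "a < b" for a b z
    using that du_deriv ddu_neg by (intro DERIV_neg_imp_decreasing[OF that(2)]) (meson less_le_trans)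
  interpret income_fluctuation P pim beta R Y du
    using P_nonneg beta_meas R_meas Y_meas beta_nonneg R_nonneg Y_nonneg du_cont du_less du_pos du_at0
      A2a2 K_fin by unfold_locales (simp_all add: powr_one)
  have "spectral_radius (\<chi> z zh. complex_of_real (K1 z zh)) < 1"
    using A2b by (simp add: Kmat_1_eq)
  then obtain v \<theta> where "\<forall>z. v z > 0" "\<theta> < 1" "\<forall>z. (\<Sum>zh\<in>UNIV. K1 z zh * v zh) \<le> \<theta> * v z"
    using subinvariant_vector_of_spectral_radius_lt_1[of K1, OF K1_nonneg] by blast
  then interpret income_fluctuation_contraction P pim beta R Y du v \<theta>
    by unfold_locales (simp_all add: K1_def)
  show ?thesis
    by (intro conjI ballI allI impI bexI[of _ cstar] cstar_in_candC euler_eq_ex1 Top_in_candC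
        Top_cstar fixed_point_unique iterates_converge) auto
qed

end
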